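(* Fix an integer $n\ge 1$, real numbers $c_1<c_2<\cdots<c_n$ and a real number $\epsilon$. On $\mathbb{R}^3$ with coordinates $(x,y,z)$ put $\rho=\sqrt{x^2+y^2}$, $r_j=\sqrt{x^2+y^2+(z-c_j)^2}$ and $$V_\epsilon=\frac{\epsilon}{2}+\frac12\sum_{j=1}^n\frac{1}{r_j},\qquad \alpha=-\frac12\sum_{j=1}^n\frac{x\,dy-y\,dx}{r_j\,(r_j-z+c_j)},$$ defined on $U=\mathbb{R}^3\setminus\{(0,0,z): z\ge c_1\}$. On $U\times S^1$, with $\varphi$ the angular coordinate on $S^1$, let $$g_\epsilon=\frac{1}{V_\epsilon}(d\varphi+\alpha)^2+V_\epsilon\,(dx^2+dy^2+dz^2),\qquad \omega_\epsilon=(d\varphi+\alpha)\wedge dz+V_\epsilon\,dx\wedge dy,$$ considered on the open subset $W$ of $U\times S^1$ where $V_\epsilon\neq 0$ and $\rho>0$. Define the complex-valued functions $$z_1=\prod_{j=1}^n\bigl(r_j-(z-c_j)\bigr)^{1/2}\,e^{-\frac{\epsilon}{2}z+\sqrt{-1}\,\varphi},\qquad z_2=x+\sqrt{-1}\,y,$$ and set $S=\sum_{j=1}^n\frac{r_j+z-c_j}{r_j}$. Then on $W$, $$g_\epsilon=\frac{1}{V_\epsilon}\frac{dz_1}{z_1}\frac{d\bar z_1}{\bar z_1}-\frac{S}{2V_\epsilon}\Bigl(\frac{dz_1}{z_1}\frac{d\bar z_2}{\bar z_2}+\frac{dz_2}{z_2}\frac{d\bar z_1}{\bar z_1}\Bigr)+\Bigl[V_\epsilon\rho^2+\frac{S^2}{4V_\epsilon}\Bigr]\frac{dz_2}{z_2}\frac{d\bar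 z_2}{\bar z_2},$$ $$\omega_\epsilon=\frac{\sqrt{-1}}{2}\Bigl(\frac{1}{V_\epsilon}\frac{dz_1}{z_1}\wedge\frac{d\bar z_1}{\bar z_1}-\frac{S}{2V_\epsilon}\Bigl(\frac{dz_1}{z_1}\wedge\frac{d\bar z_2}{\bar z_2}+\frac{dz_2}{z_2}\wedge\frac{d\bar z_1}{\bar z_1}\Bigr)+\Bigl[V_\epsilon\rho^2+\frac{S^2}{4V_\epsilon}\Bigr]\frac{dz_2}{z_2}\wedge\frac{d\bar z_2}{\bar z_2}\Bigr).$$
   Context: For $\epsilon>0$, $g_\epsilon$ is the (toric) multi-Taub-NUT metric; for $\epsilon=0$ it is the Gibbons–Hawking metric; for $\epsilon<0$ it is a Riemannian metric where $V_\epsilon>0$ and minus a Riemannian metric where $V_\epsilon<0$. The functions $z_1,z_2$ are holomorphic for the complex structure whose $(1,0)$-forms are spanned by $dx+\sqrt{-1}\,dy$ and $(d\varphi+\alpha)+\sqrt{-1}\,V_\epsilon\,dz$. In the formula for $g_\epsilon$, a product $ab$ of two (complex) $1$-forms denotes the symmetric product $\tfrac12(a\otimes b+b\otimes a)$, so that e.g. $(dx+\sqrt{-1}dy)(dx-\sqrt{-1}dy)=dx^2+dy^2$; $dx^2$ means $dx\,dx$. *)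

theory Defs
  imports "HOL-Analysis.Analysis"
begin

text \<open>Points of U x S^1 are written (x,y,z,phi) with phi a real (covering) angular
coordinate; tangent vectors are (vx,vy,vz,vphi).  The centres are c 1 < ... < c n.\<close>

type_synonym pt = "real \<times> real \<times> real \<times> real"

definition rj :: "(nat \<Rightarrow> real) \<Rightarrow> nat \<Rightarrow> real \<Rightarrow> real \<Rightarrow> real \<Rightarrow> real" where
  "rj c j x y z = sqrt (x\<^sup>2 + y\<^sup>2 + (z - c j)\<^sup>2)"

definition Veps :: "real \<Rightarrow> nat \<Rightarrow> (nat \<Rightarrow> real) \<Rightarrow> real \<Rightarrow> real \<Rightarrow> real \<Rightarrow> real" where
  "Veps eps n c x y z = eps / 2 + 1/2 * (\<Sum>j=1..n. 1 / rj c j x y z)"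

definition rho :: "real \<Rightarrow> real \<Rightarrow> real" where
  "rho x y = sqrt (x\<^sup>2 + y\<^sup>2)"

definition alpha :: "nat \<Rightarrow> (nat \<Rightarrow> real) \<Rightarrow> pt \<Rightarrow> pt \<Rightarrow> real" where
  "alpha n c p v = (case p of (x,y,z,_) \<Rightarrow> case v of (vx,vy,_,_) \<Rightarrow>
     - 1/2 * (\<Sum>j=1..n. (x * vy - y * vx) / (rj c j x y z * (rj c j x y z - z + c j))))"

definition theta :: "nat \<Rightarrow> (nat \<Rightarrow> real) \<Rightarrow> pt \<Rightarrow> pt \<Rightarrow> real" where
  "theta n c p v = snd (snd (snd v)) + alpha n c p v"

definition geps :: "real \<Rightarrow> nat \<Rightarrow> (nat \<Rightarrow> real) \<Rightarrow> pt \<Rightarrow> pt \<Rightarrow> pt \<Rightarrow> real" where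
  "geps eps n c p v w = (case p of (x,y,z,_) \<Rightarrow> case v of (vx,vy,vz,_) \<Rightarrow> case w of (wx,wy,wz,_) \<Rightarrow>
     1 / Veps eps n c x y z * (theta n c p v * theta n c p w)
     + Veps eps n c x y z * (vx * wx + vy * wy + vz * wz))"

text \<open>Wedge convention: (a \<and> b)(v,w) = a(v) b(w) - a(w) b(v).\<close>
definition omegaeps :: "real \<Rightarrow> nat \<Rightarrow> (nat \<Rightarrow> real) \<Rightarrow> pt \<Rightarrow> pt \<Rightarrow> pt \<Rightarrow> real" where
  "omegaeps eps n c p v w = (case p of (x,y,z,_) \<Rightarrow> case v of (vx,vy,vz,_) \<Rightarrow> case w of (wx,wy,wz,_) \<Rightarrow>
     (theta n c p v * wz - theta n c p w * vz) + Veps eps n c x y z * (vx * wy - wx * vy))"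

definition Udom :: "(nat \<Rightarrow> real) \<Rightarrow> pt set" where
  "Udom c = {(x,y,z,phi). \<not> (x = 0 \<and> y = 0 \<and> z \<ge> c 1)}"

definition Wdom :: "real \<Rightarrow> nat \<Rightarrow> (nat \<Rightarrow> real) \<Rightarrow> pt set" where
  "Wdom eps n c = {(x,y,z,phi). (x,y,z,phi) \<in> Udom c \<and> Veps eps n c x y z \<noteq> 0 \<and> rho x y > 0}"

definition z1 :: "real \<Rightarrow> nat \<Rightarrow> (nat \<Rightarrow> real) \<Rightarrow> pt \<Rightarrow> complex" where
  "z1 eps n c p = (case p of (x,y,z,phi) \<Rightarrow>
     complex_of_real ((\<Prod>j=1..n. sqrt (rj c j x y z - (z - c j))) * exp (- eps / 2 * z))
     * exp (\<i> * complex_of_real phi))"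

definition z2 :: "pt \<Rightarrow> complex" where
  "z2 p = (case p of (x,y,_,_) \<Rightarrow> Complex x y)"

definition Ssum :: "nat \<Rightarrow> (nat \<Rightarrow> real) \<Rightarrow> real \<Rightarrow> real \<Rightarrow> real \<Rightarrow> real" where
  "Ssum n c x y z = (\<Sum>j=1..n. (rj c j x y z + z - c j) / rj c j x y z)"

definition symp :: "(pt \<Rightarrow> complex) \<Rightarrow> (pt \<Rightarrow> complex) \<Rightarrow> pt \<Rightarrow> pt \<Rightarrow> complex" where
  "symp a b v w = (a v * b w + a w * b v) / 2"

definition wedge :: "(pt \<Rightarrow> complex) \<Rightarrow> (pt \<Rightarrow> complex) \<Rightarrow> pt \<Rightarrow> pt \<Rightarrow> complex" where
  "wedge a b v w = a v * b w - a w * b v"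

end

theory Submission
  imports Defs
begin

text \<open>Away from the axis, use polar coordinates \<open>x + \<i> y = \<rho> exp (\<i> \<vartheta>)\<close>.
  Then \<open>dz\<^sub>2/z\<^sub>2 = d\<rho>/\<rho> + \<i> d\<vartheta>\<close>, and since
  \<open>(r\<^sub>j - (z - c\<^sub>j)) (r\<^sub>j + (z - c\<^sub>j)) = \<rho>\<^sup>2\<close>, every factor of \<open>z\<^sub>1\<close> has logarithmic
  derivative \<open>(r\<^sub>j + z - c\<^sub>j)/(2 r\<^sub>j) d\<rho>/\<rho> - dz/(2 r\<^sub>j)\<close>; summing gives
  \<open>dz\<^sub>1/z\<^sub>1 = (S/2) d\<rho>/\<rho> - V\<^sub>\<epsilon> dz + \<i> d\<phi>\<close>. The same identity rewrites the connection form as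
  \<open>\<alpha> = -(S/2) d\<vartheta>\<close>. In the real coframe \<open>d\<rho>/\<rho>, d\<vartheta>, dz, d\<phi>\<close> both sides of the two
  claimed identities are explicit quadratic expressions, and they agree because
  \<open>dx\<^sup>2 + dy\<^sup>2 = \<rho>\<^sup>2 ((d\<rho>/\<rho>)\<^sup>2 + d\<vartheta>\<^sup>2)\<close> and \<open>dx \<and> dy = \<rho>\<^sup>2 (d\<rho>/\<rho>) \<and> d\<vartheta>\<close>.\<close>

lemma has_derivative_prod_logderiv:
  fixes f :: "'i \<Rightarrow> 'a::real_normed_vector \<Rightarrow> 'b::real_normed_field"
  assumes "finite I"
    and "\<And>i. i \<in> I \<Longrightarrow> (f i has_derivative f' i) (at x within S)"
    and "\<And>i. i \<in> I \<Longrightarrow> f i x \<noteq> 0"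
  shows "((\<lambda>y. \<Prod>i\<in>I. f i y) has_derivative (\<lambda>v. (\<Prod>i\<in>I. f i x) * (\<Sum>i\<in>I. f' i v / f i x)))
    (at x within S)"
proof -
  have "((\<lambda>y. \<Prod>i\<in>I. f i y) has_derivative (\<lambda>v. \<Sum>i\<in>I. f' i v * (\<Prod>j\<in>I - {i}. f j x)))
      (at x within S)"
    using assms(2) by (rule has_derivative_prod)
  moreover have "f' i v * (\<Prod>j\<in>I - {i}. f j x) = (\<Prod>i\<in>I. f i x) * (f' i v / f i x)"
    if "i \<in> I" for i v
    using that assms(1,3) by (simp add: prod.remove)
  ultimately show ?thesis by (simp add: sum_distrib_left)
qed

lemma has_derivative_sqrt_logderiv:
  assumes "(f has_derivative f') (at x within S)" and "f x > 0"
  shows "((\<lambda>y. sqrt (f y)) has_derivative (\<lambda>v. sqrt (f x) * (f' v / (2 * f x)))) (at x within S)"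
proof (rule has_derivative_eq_rhs[OF has_derivative_real_sqrt[OF assms(2,1)]], rule ext)
  fix v
  define s where "s = sqrt (f x)"
  have "s > 0" "f x = s * s" using assms(2) by (simp_all add: s_def)
  then show "f' v * (inverse (sqrt (f x)) / 2) = sqrt (f x) * (f' v / (2 * f x))"
    unfolding s_def[symmetric] by (simp add: field_simps)
qed

lemma divide_mult_sub_conjugate:
  fixes r \<zeta> R M :: real
  assumes "r\<^sup>2 = R + \<zeta>\<^sup>2" and "R \<noteq> 0"
  shows "M / (r * (r - \<zeta>)) = (r + \<zeta>) / r * (M / R)"
proof -
  have conj: "(r - \<zeta>) * (r + \<zeta>) = R" using assms(1) by (simp add: power2_eq_square algebra_simps)
  then have "r + \<zeta> \<noteq> 0" using assms(2) by auto
  then have "M / (r * (r - \<zeta>)) = M * (r + \<zeta>) / (r * ((r - \<zeta>) * (r + \<zeta>)))"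
    using mult_divide_mult_cancel_right[of "r + \<zeta>" M "r * (r - \<zeta>)"] by (simp add: mult.assoc)
  also have "\<dots> = (r + \<zeta>) / r * (M / R)" unfolding conj by simp
  finally show ?thesis .
qed

text \<open>The two identities below are the theorem in the real coframe: \<open>A, B, Z, P, X, Y\<close> stand
  for the values of \<open>d\<rho>/\<rho>, d\<vartheta>, dz, d\<phi>, dx, dy\<close> on a tangent vector (primed: on a
  second one), \<open>R = \<rho>\<^sup>2\<close>, and \<open>w1 = dz\<^sub>1/z\<^sub>1\<close>, \<open>w2 = dz\<^sub>2/z\<^sub>2\<close>.\<close>

lemma metric_identity:
  fixes V S R A B Z P X Y A' B' Z' P' X' Y' :: real
  assumes "V \<noteq> 0" and "X * X' + Y * Y' = R * (A * A' + B * B')"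
  defines "w1 \<equiv> Complex (S / 2 * A - V * Z) P" and "w1' \<equiv> Complex (S / 2 * A' - V * Z') P'"
    and "w2 \<equiv> Complex A B" and "w2' \<equiv> Complex A' B'"
  shows "complex_of_real (1 / V * ((P - S / 2 * B) * (P' - S / 2 * B')) + V * (X * X' + Y * Y' + Z * Z')) =
    complex_of_real (1 / V) * ((w1 * cnj w1' + w1' * cnj w1) / 2)
    - complex_of_real (S / (2 * V)) * ((w1 * cnj w2' + w1' * cnj w2) / 2 + (w2 * cnj w1' + w2' * cnj w1) / 2)
    + complex_of_real (V * R + S\<^sup>2 / (4 * V)) * ((w2 * cnj w2' + w2' * cnj w2) / 2)"
  unfolding assms(2-6) using assms(1) by (simp add: complex_eq_iff field_simps power2_eq_square)

lemma symplectic_identity: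
  fixes V S R A B Z P X Y A' B' Z' P' X' Y' :: real
  assumes "V \<noteq> 0" and "X * Y' - X' * Y = R * (A * B' - A' * B)"
  defines "w1 \<equiv> Complex (S / 2 * A - V * Z) P" and "w1' \<equiv> Complex (S / 2 * A' - V * Z') P'"
    and "w2 \<equiv> Complex A B" and "w2' \<equiv> Complex A' B'"
  shows "complex_of_real (((P - S / 2 * B) * Z' - (P' - S / 2 * B') * Z) + V * (X * Y' - X' * Y)) =
    \<i> / 2 * (complex_of_real (1 / V) * (w1 * cnj w1' - w1' * cnj w1)
    - complex_of_real (S / (2 * V)) * ((w1 * cnj w2' - w1' * cnj w2) + (w2 * cnj w1' - w2' * cnj w1))
    + complex_of_real (V * R + S\<^sup>2 / (4 * V)) * (w2 * cnj w2' - w2' * cnj w2))"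
  unfolding assms(2-6) using assms(1) by (simp add: complex_eq_iff field_simps power2_eq_square)

abbreviation coord_x :: "pt \<Rightarrow> real" where "coord_x q \<equiv> fst q"
abbreviation coord_y :: "pt \<Rightarrow> real" where "coord_y q \<equiv> fst (snd q)"
abbreviation coord_z :: "pt \<Rightarrow> real" where "coord_z q \<equiv> fst (snd (snd q))"
abbreviation coord_phi :: "pt \<Rightarrow> real" where "coord_phi q \<equiv> snd (snd (snd q))"

text \<open>The 1-forms \<open>d\<rho>/\<rho>\<close> and \<open>d\<vartheta>\<close> at the point with coordinates \<open>x, y\<close>.\<close>

definition radial_form :: "real \<Rightarrow> real \<Rightarrow> pt \<Rightarrow> real" where
  "radial_form x y v = (x * coord_x v + y * coord_y v) / (x\<^sup>2 + y\<^sup>2)"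

definition angular_form :: "real \<Rightarrow> real \<Rightarrow> pt \<Rightarrow> real" where
  "angular_form x y v = (x * coord_y v - y * coord_x v) / (x\<^sup>2 + y\<^sup>2)"

definition dlog_z1 :: "real \<Rightarrow> nat \<Rightarrow> (nat \<Rightarrow> real) \<Rightarrow> real \<Rightarrow> real \<Rightarrow> real \<Rightarrow> pt \<Rightarrow> complex" where
  "dlog_z1 eps n c x y z v =
    Complex (Ssum n c x y z / 2 * radial_form x y v - Veps eps n c x y z * coord_z v) (coord_phi v)"

definition dlog_z2 :: "real \<Rightarrow> real \<Rightarrow> pt \<Rightarrow> complex" where
  "dlog_z2 x y v = Complex (radial_form x y v) (angular_form x y v)"

lemma polar_inner:
  assumes "x\<^sup>2 + y\<^sup>2 > 0"
  shows "coord_x v * coord_x w + coord_y v * coord_y w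
    = (x\<^sup>2 + y\<^sup>2) * (radial_form x y v * radial_form x y w + angular_form x y v * angular_form x y w)"
proof -
  define R where "R = x\<^sup>2 + y\<^sup>2"
  have "(x * coord_x v + y * coord_y v) * (x * coord_x w + y * coord_y w)
      + (x * coord_y v - y * coord_x v) * (x * coord_y w - y * coord_x w)
      = R * (coord_x v * coord_x w + coord_y v * coord_y w)"
    unfolding R_def by (simp add: power2_eq_square algebra_simps)
  moreover have "R * (a / R * (b / R) + c / R * (d / R)) = (a * b + c * d) / R" for a b c d :: real
    using assms unfolding R_def[symmetric] by (simp add: field_simps power2_eq_square)
  ultimately show ?thesis
    using assms unfolding radial_form_def angular_form_def R_def[symmetric] by simp
qed

lemma polar_cross:
  assumes "x\<^sup>2 + y\<^sup>2 > 0"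
  shows "coord_x v * coord_y w - coord_x w * coord_y v
    = (x\<^sup>2 + y\<^sup>2) * (radial_form x y v * angular_form x y w - radial_form x y w * angular_form x y v)"
proof -
  define R where "R = x\<^sup>2 + y\<^sup>2"
  have "(x * coord_x v + y * coord_y v) * (x * coord_y w - y * coord_x w)
      - (x * coord_x w + y * coord_y w) * (x * coord_y v - y * coord_x v)
      = R * (coord_x v * coord_y w - coord_x w * coord_y v)"
    unfolding R_def by (simp add: power2_eq_square algebra_simps)
  moreover have "R * (a / R * (d / R) - b / R * (c / R)) = (a * d - b * c) / R" for a b c d :: real
    using assms unfolding R_def[symmetric] by (simp add: field_simps power2_eq_square)
  ultimately show ?thesis
    using assms unfolding radial_form_def angular_form_def R_def[symmetric] by simp
qed

lemma rj_sq: "(rj c j x y z)\<^sup>2 = (x\<^sup>2 + y\<^sup>2) + (z - c j)\<^sup>2"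
  unfolding rj_def by simp

lemma rj_pos: "x\<^sup>2 + y\<^sup>2 > 0 \<Longrightarrow> rj c j x y z > 0"
  unfolding rj_def by (simp add: add_pos_nonneg)

lemma rj_gt_height: "x\<^sup>2 + y\<^sup>2 > 0 \<Longrightarrow> z - c j < rj c j x y z"
  unfolding rj_def
  using real_sqrt_less_mono[of "(z - c j)\<^sup>2" "x\<^sup>2 + y\<^sup>2 + (z - c j)\<^sup>2"] by simp

lemma rj_has_derivative:
  assumes "x\<^sup>2 + y\<^sup>2 > 0"
  shows "((\<lambda>q. rj c j (coord_x q) (coord_y q) (coord_z q)) has_derivative
     (\<lambda>v. (x * coord_x v + y * coord_y v + (z - c j) * coord_z v) / rj c j x y z)) (at (x, y, z, phi))"
proof -
  have pos: "(coord_x (x, y, z, phi))\<^sup>2 + (coord_y (x, y, z, phi))\<^sup>2 + (coord_z (x, y, z, phi) - c j)\<^sup>2 > 0"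
    using assms by (simp add: add_pos_nonneg)
  have "((\<lambda>q. (coord_x q)\<^sup>2 + (coord_y q)\<^sup>2 + (coord_z q - c j)\<^sup>2) has_derivative
     (\<lambda>v. 2 * x * coord_x v + 2 * y * coord_y v + 2 * (z - c j) * coord_z v)) (at (x, y, z, phi))"
    by (auto intro!: derivative_eq_intros simp: field_simps)
  from has_derivative_real_sqrt[OF pos this] show ?thesis
    unfolding rj_def by (rule has_derivative_eq_rhs[OF _ ext]) (use pos in \<open>simp add: field_simps\<close>)
qed

lemma alpha_eq_angular:
  assumes "x\<^sup>2 + y\<^sup>2 > 0"
  shows "alpha n c (x, y, z, phi) v = - (Ssum n c x y z / 2 * angular_form x y v)"
proof -
  have "(x * coord_y v - y * coord_x v) / (rj c j x y z * (rj c j x y z - (z - c j)))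
      = (rj c j x y z + (z - c j)) / rj c j x y z * angular_form x y v" for j
    using divide_mult_sub_conjugate[OF rj_sq[of c j x y z] order.strict_implies_not_eq[OF assms, symmetric]]
    unfolding angular_form_def by simp
  then have "(x * coord_y v - y * coord_x v) / (rj c j x y z * (rj c j x y z - z + c j))
      = (rj c j x y z + z - c j) / rj c j x y z * angular_form x y v" for j
    by (simp add: algebra_simps)
  moreover have "alpha n c (x, y, z, phi) v = - 1/2 *
      (\<Sum>j=1..n. (x * coord_y v - y * coord_x v) / (rj c j x y z * (rj c j x y z - z + c j)))"
    by (simp add: alpha_def split: prod.splits)
  ultimately show ?thesis
    by (simp add: Ssum_def sum_distrib_right)
qed

lemma theta_eq_angular:
  assumes "x\<^sup>2 + y\<^sup>2 > 0"
  shows "theta n c (x, y, z, phi) v = coord_phi v - Ssum n c x y z / 2 * angular_form x y v"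
  unfolding theta_def alpha_eq_angular[OF assms] by simp

lemma z2_has_derivative: "(z2 has_derivative (\<lambda>v. Complex (coord_x v) (coord_y v))) (at p)"
proof -
  have z2_eq: "z2 = (\<lambda>q. of_real (coord_x q) + \<i> * of_real (coord_y q))"
    by (rule ext) (simp add: z2_def Complex_eq split: prod.splits)
  show ?thesis unfolding z2_eq
    by (rule has_derivative_eq_rhs, (rule derivative_intros)+) (simp add: Complex_eq)
qed

lemma z2_logderiv:
  assumes "x\<^sup>2 + y\<^sup>2 > 0"
  shows "Complex (coord_x v) (coord_y v) / z2 (x, y, z, phi) = dlog_z2 x y v"
proof -
  define R where "R = x\<^sup>2 + y\<^sup>2"
  have "R \<noteq> 0" using assms unfolding R_def by linarith
  have "Complex x y \<noteq> 0" using \<open>R \<noteq> 0\<close> by (auto simp: complex_eq_iff R_def)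
  moreover have "(x * coord_x v + y * coord_y v) * x - (x * coord_y v - y * coord_x v) * y = R * coord_x v"
    and "(x * coord_x v + y * coord_y v) * y + (x * coord_y v - y * coord_x v) * x = R * coord_y v"
    unfolding R_def by (simp_all add: power2_eq_square algebra_simps)
  with \<open>R \<noteq> 0\<close> have "dlog_z2 x y v * Complex x y = Complex (coord_x v) (coord_y v)"
    unfolding dlog_z2_def radial_form_def angular_form_def R_def[symmetric]
    by (simp add: complex_eq_iff field_simps) (simp add: distrib_left[symmetric])
  ultimately show ?thesis by (simp add: z2_def divide_eq_eq)
qed

lemma sqrt_rj_logderiv_eq:
  assumes "x\<^sup>2 + y\<^sup>2 > 0"
  shows "((x * coord_x v + y * coord_y v + (z - c j) * coord_z v) / rj c j x y z - coord_z v)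
      / (2 * (rj c j x y z - (z - c j)))
    = (rj c j x y z + z - c j) / rj c j x y z * (radial_form x y v / 2) - 1 / rj c j x y z * (coord_z v / 2)"
proof -
  define r \<zeta> where "r = rj c j x y z" and "\<zeta> = z - c j"
  have "r > 0" and "r \<noteq> \<zeta>"
    using rj_pos[OF assms, of c j z] rj_gt_height[OF assms, of z c j] unfolding r_def \<zeta>_def by simp_all
  then have "((x * coord_x v + y * coord_y v + \<zeta> * coord_z v) / r - coord_z v) / (2 * (r - \<zeta>))
    = (x * coord_x v + y * coord_y v) / 2 / (r * (r - \<zeta>)) - coord_z v / (2 * r)"
    by (simp add: field_simps)
  also have "\<dots> = (r + \<zeta>) / r * (radial_form x y v / 2) - 1 / r * (coord_z v / 2)"
    unfolding divide_mult_sub_conjugate[OF rj_sq[of c j x y z, folded r_def \<zeta>_def]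
        order.strict_implies_not_eq[OF assms, symmetric]]
    by (simp add: radial_form_def algebra_simps)
  finally show ?thesis unfolding r_def \<zeta>_def by (simp add: add_diff_eq)
qed

lemma height_product_has_derivative:
  fixes n :: nat and c :: "nat \<Rightarrow> real"
  assumes "x\<^sup>2 + y\<^sup>2 > 0"
  defines "P \<equiv> \<lambda>q. \<Prod>j=1..n. sqrt (rj c j (coord_x q) (coord_y q) (coord_z q) - (coord_z q - c j))"
  shows "(P has_derivative (\<lambda>v. P (x, y, z, phi) *
      (Ssum n c x y z * (radial_form x y v / 2) - (\<Sum>j=1..n. 1 / rj c j x y z) * (coord_z v / 2))))
    (at (x, y, z, phi))"
proof -
  define p where "p = (x, y, z, phi)"
  define u where "u j q = rj c j (coord_x q) (coord_y q) (coord_z q) - (coord_z q - c j)" for j q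
  define du where "du j v = (x * coord_x v + y * coord_y v + (z - c j) * coord_z v) / rj c j x y z - coord_z v"
    for j v
  have u_pos: "u j p > 0" for j
    using rj_gt_height[OF assms(1)] by (simp add: u_def p_def)
  have "(u j has_derivative du j) (at p)" for j
    unfolding u_def du_def p_def by (auto intro!: derivative_eq_intros rj_has_derivative[OF assms(1)])
  then have "(P has_derivative (\<lambda>v. P p * (\<Sum>j=1..n. sqrt (u j p) * (du j v / (2 * u j p)) / sqrt (u j p))))
      (at p)"
    unfolding P_def u_def[symmetric] using u_pos
    by (intro has_derivative_prod_logderiv has_derivative_sqrt_logderiv)
      (auto simp: less_imp_neq[OF u_pos, symmetric])
  moreover have logderiv_factor: "sqrt (u j p) * (du j v / (2 * u j p)) / sqrt (u j p)
      = (rj c j x y z + z - c j) / rj c j x y z * (radial_form x y v / 2) - 1 / rj c j x y z * (coord_z v / 2)"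
    for j v
    using u_pos[of j] sqrt_rj_logderiv_eq[OF assms(1)] by (simp add: u_def du_def p_def)
  ultimately show ?thesis
    unfolding p_def by (simp only: sum.cong[OF refl logderiv_factor] Ssum_def sum_subtractf sum_distrib_right)
qed

lemma z1_has_derivative:
  assumes "x\<^sup>2 + y\<^sup>2 > 0"
  shows "(z1 eps n c has_derivative (\<lambda>v. z1 eps n c (x, y, z, phi) * dlog_z1 eps n c x y z v))
    (at (x, y, z, phi))"
proof -
  define p where "p = (x, y, z, phi)"
  define P where "P q = (\<Prod>j=1..n. sqrt (rj c j (coord_x q) (coord_y q) (coord_z q) - (coord_z q - c j)))"
    for q
  define L where "L v = Ssum n c x y z / 2 * radial_form x y v - Veps eps n c x y z * coord_z v" for v
  have "(P has_derivative (\<lambda>v. P p *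
      (Ssum n c x y z * (radial_form x y v / 2) - (\<Sum>j=1..n. 1 / rj c j x y z) * (coord_z v / 2)))) (at p)"
    unfolding P_def[abs_def] p_def by (rule height_product_has_derivative[OF assms])
  then have dP: "(P has_derivative (\<lambda>v. P p * (L v + eps / 2 * coord_z v))) (at p)"
    by (rule has_derivative_eq_rhs) (simp add: fun_eq_iff L_def Veps_def algebra_simps)
  have dE: "((\<lambda>q. exp (- eps / 2 * coord_z q)) has_derivative
      (\<lambda>v. exp (- eps / 2 * z) * (- eps / 2 * coord_z v))) (at p)"
    unfolding p_def by (auto intro!: derivative_eq_intros)
  have "((\<lambda>q. \<i> * of_real (coord_phi q)) has_derivative (\<lambda>v. \<i> * of_real (coord_phi v))) (at p)"
    by (auto intro!: derivative_eq_intros)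
  moreover have "(exp has_derivative (*) (exp (\<i> * of_real phi))) (at (\<i> * of_real (coord_phi p)))"
    using DERIV_exp[unfolded has_field_derivative_def] by (simp add: p_def)
  ultimately have dC: "((\<lambda>q. exp (\<i> * of_real (coord_phi q))) has_derivative
      (\<lambda>v. exp (\<i> * of_real phi) * (\<i> * of_real (coord_phi v)))) (at p)"
    using has_derivative_compose by (fastforce simp: mult.commute)
  have z1_eq: "z1 eps n c = (\<lambda>q. of_real (P q * exp (- eps / 2 * coord_z q)) * exp (\<i> * of_real (coord_phi q)))"
    by (rule ext) (simp add: z1_def P_def split: prod.splits)
  have dlog_z1_eq: "dlog_z1 eps n c x y z v = Complex (L v) (coord_phi v)" for v
    by (simp add: dlog_z1_def L_def)
  show ?thesis
    unfolding z1_eq dlog_z1_eq p_def[symmetric]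
    by (rule has_derivative_eq_rhs[OF has_derivative_mult[OF
          has_derivative_of_real[OF has_derivative_mult[OF dP dE]] dC]])
      (simp add: p_def Complex_eq algebra_simps)
qed

lemma z1_nonzero:
  assumes "x\<^sup>2 + y\<^sup>2 > 0"
  shows "z1 eps n c (x, y, z, phi) \<noteq> 0"
proof -
  have "(\<Prod>j=1..n. sqrt (rj c j x y z - (z - c j))) > 0"
    using rj_gt_height[OF assms] by (intro prod_pos) simp
  then show ?thesis by (simp add: z1_def del: prod_zero_iff of_real_prod)
qed

lemma geps_eq_angular:
  assumes "x\<^sup>2 + y\<^sup>2 > 0"
  shows "geps eps n c (x, y, z, phi) v w =
    1 / Veps eps n c x y z * ((coord_phi v - Ssum n c x y z / 2 * angular_form x y v)
      * (coord_phi w - Ssum n c x y z / 2 * angular_form x y w))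
    + Veps eps n c x y z * (coord_x v * coord_x w + coord_y v * coord_y w + coord_z v * coord_z w)"
  using theta_eq_angular[OF assms] by (simp add: geps_def split: prod.splits)

lemma omegaeps_eq_angular:
  assumes "x\<^sup>2 + y\<^sup>2 > 0"
  shows "omegaeps eps n c (x, y, z, phi) v w =
    ((coord_phi v - Ssum n c x y z / 2 * angular_form x y v) * coord_z w
      - (coord_phi w - Ssum n c x y z / 2 * angular_form x y w) * coord_z v)
    + Veps eps n c x y z * (coord_x v * coord_y w - coord_x w * coord_y v)"
  using theta_eq_angular[OF assms] by (simp add: omegaeps_def split: prod.splits)

lemma geps_eq_symp:
  assumes "x\<^sup>2 + y\<^sup>2 > 0" and "Veps eps n c x y z \<noteq> 0"
  defines "V \<equiv> Veps eps n c x y z" and "S \<equiv> Ssum n c x y z"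
    and "a1 \<equiv> dlog_z1 eps n c x y z" and "a2 \<equiv> dlog_z2 x y"
  shows "complex_of_real (geps eps n c (x, y, z, phi) v w) =
      complex_of_real (1 / V) * symp a1 (cnj \<circ> a1) v w
    - complex_of_real (S / (2 * V)) * (symp a1 (cnj \<circ> a2) v w + symp a2 (cnj \<circ> a1) v w)
    + complex_of_real (V * (x\<^sup>2 + y\<^sup>2) + S\<^sup>2 / (4 * V)) * symp a2 (cnj \<circ> a2) v w"
  unfolding assms(3-6) geps_eq_angular[OF assms(1)] symp_def dlog_z1_def dlog_z2_def o_def
  by (rule metric_identity[OF assms(2) polar_inner[OF assms(1)]])

lemma omegaeps_eq_wedge:
  assumes "x\<^sup>2 + y\<^sup>2 > 0" and "Veps eps n c x y z \<noteq> 0"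
  defines "V \<equiv> Veps eps n c x y z" and "S \<equiv> Ssum n c x y z"
    and "a1 \<equiv> dlog_z1 eps n c x y z" and "a2 \<equiv> dlog_z2 x y"
  shows "complex_of_real (omegaeps eps n c (x, y, z, phi) v w) =
      \<i> / 2 * (complex_of_real (1 / V) * wedge a1 (cnj \<circ> a1) v w
    - complex_of_real (S / (2 * V)) * (wedge a1 (cnj \<circ> a2) v w + wedge a2 (cnj \<circ> a1) v w)
    + complex_of_real (V * (x\<^sup>2 + y\<^sup>2) + S\<^sup>2 / (4 * V)) * wedge a2 (cnj \<circ> a2) v w)"
  unfolding assms(3-6) omegaeps_eq_angular[OF assms(1)] wedge_def dlog_z1_def dlog_z2_def o_def
  by (rule symplectic_identity[OF assms(2) polar_cross[OF assms(1)]])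

theorem mainTheorem1:
  fixes n :: nat and c :: "nat \<Rightarrow> real" and eps :: real
  assumes "n \<ge> 1"
    and "\<And>i j. 1 \<le> i \<Longrightarrow> i < j \<Longrightarrow> j \<le> n \<Longrightarrow> c i < c j"
  shows "\<forall>x y z phi. (x,y,z,phi) \<in> Wdom eps n c \<longrightarrow>
    (let p = (x,y,z,phi); V = Veps eps n c x y z; S = Ssum n c x y z;
         R = (rho x y)\<^sup>2 in
     \<exists>D1 D2.
       (z1 eps n c has_derivative D1) (at p) \<and>
       (z2 has_derivative D2) (at p) \<and>
       (let a1 = (\<lambda>v. D1 v / z1 eps n c p); b1 = (\<lambda>v. cnj (D1 v) / cnj (z1 eps n c p));
            a2 = (\<lambda>v. D2 v / z2 p); b2 = (\<lambda>v. cnj (D2 v) / cnj (z2 p)) in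
        (\<forall>v w. complex_of_real (geps eps n c p v w) =
            complex_of_real (1 / V) * symp a1 b1 v w
          - complex_of_real (S / (2 * V)) * (symp a1 b2 v w + symp a2 b1 v w)
          + complex_of_real (V * R + S\<^sup>2 / (4 * V)) * symp a2 b2 v w) \<and>
        (\<forall>v w. complex_of_real (omegaeps eps n c p v w) =
            \<i> / 2 * (complex_of_real (1 / V) * wedge a1 b1 v w
          - complex_of_real (S / (2 * V)) * (wedge a1 b2 v w + wedge a2 b1 v w)
          + complex_of_real (V * R + S\<^sup>2 / (4 * V)) * wedge a2 b2 v w))))"
  apply (intro allI impI)
  subgoal premises W for x y z phi
  proof -
    have pos: "x\<^sup>2 + y\<^sup>2 > 0" and V: "Veps eps n c x y z \<noteq> 0"
      using W by (auto simp: Wdom_def rho_def)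
    define D1 where "D1 v = z1 eps n c (x, y, z, phi) * dlog_z1 eps n c x y z v" for v
    define D2 where "D2 v = Complex (coord_x v) (coord_y v)" for v
    have "z1 eps n c (x, y, z, phi) \<noteq> 0" using z1_nonzero[OF pos] .
    then have logderiv_z1: "(\<lambda>v. D1 v / z1 eps n c (x, y, z, phi)) = dlog_z1 eps n c x y z"
        "(\<lambda>v. cnj (D1 v) / cnj (z1 eps n c (x, y, z, phi))) = cnj \<circ> dlog_z1 eps n c x y z"
      by (auto simp: D1_def)
    have logderiv_z2: "(\<lambda>v. D2 v / z2 (x, y, z, phi)) = dlog_z2 x y"
        "(\<lambda>v. cnj (D2 v) / cnj (z2 (x, y, z, phi))) = cnj \<circ> dlog_z2 x y"
      using z2_logderiv[OF pos] by (auto simp: D2_def complex_cnj_divide[symmetric])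
    have derivs: "(z1 eps n c has_derivative D1) (at (x, y, z, phi))" "(z2 has_derivative D2) (at (x, y, z, phi))"
      unfolding D1_def D2_def by (rule z1_has_derivative[OF pos] z2_has_derivative)+
    have rho_sq: "(rho x y)\<^sup>2 = x\<^sup>2 + y\<^sup>2" by (simp add: rho_def)
    show ?thesis
      unfolding Let_def
      by (rule exI[of _ D1], rule exI[of _ D2], unfold logderiv_z1 logderiv_z2 rho_sq)
        (intro conjI allI derivs geps_eq_symp[OF pos V] omegaeps_eq_wedge[OF pos V])
  qed
  done

end
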